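(* Let $c>0$, $0<\lambda\le T_M$, and let $f\in C^2(\mathbb R)$ solve $$f''(y)-cf'(y)-f^4(y)=-\int_{-\infty}^\infty E(y-\eta)f^4(\eta)\,d\eta\ (y\in\mathbb R),\qquad 0<\lambda\le f\le T_M.$$ Then $f$ does not attain its infimum at $+\infty$, i.e. $\liminf_{y\to\infty}f(y)>\inf_{\mathbb R}f$, unless $f$ is constant.
   Context: $E(x)=\frac12\int_{|x|}^\infty\frac{e^{-t}}{t}dt$. *)

theory Defs
  imports "HOL-Analysis.Analysis"
begin

definition E :: "real \<Rightarrow> real" where
  "E x = (1/2) * integral {\<bar>x\<bar>..} (\<lambda>t. exp (- t) / t)"

end

theory Submission
  imports Defs
begin

text \<open>
  Let m be the infimum of f, v = f^4 - m^4 >= 0, and V1, V2, V3 iterated antiderivatives of v.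
  The kernel E has unit mass, and by Fubini (E * w)(y) is the e^(-t)-weighted average over t > 0
  of the means of w on [y - t, y + t]; so the equation reads f'' - c f' = v - E * v.
  Moving the convolution onto antiderivatives yields two first integrals:
  Phi = f' - c f + (E * V1 - V1) is constant, and Psi = f - c F + (E * V2 - V2) is affine with
  slope Phi, where F' = f. The correction L = E * V2 - V2 is nonnegative, and L(y) is small as soon
  as f - m is small on a long window around y.

  Suppose f comes arbitrarily close to m near +infinity. Since f'' - c f' <= K (f - m), with K a
  Lipschitz constant of x^4 on [0, T_M], and f'^2 <= C (f - m) because f'' is bounded, f then stays
  close to m on long windows around such points, so that Q = f - m + L is small there. Between
  two points Q grows at least at rate Phi + c m; as Q >= 0, this forces Phi + c m >= 0, and then
  Q(y) <= Q(Y) for every Y >= y gives Q = 0, i.e. f = m.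
\<close>

lemma DERIV_nonneg_imp_le:
  fixes h h' :: "real \<Rightarrow> real"
  assumes "a \<le> b" and "\<And>u. a \<le> u \<Longrightarrow> u \<le> b \<Longrightarrow> (h has_real_derivative h' u) (at u)"
    and "\<And>u. a \<le> u \<Longrightarrow> u \<le> b \<Longrightarrow> 0 \<le> h' u"
  shows "h a \<le> h b"
  using assms by (intro DERIV_nonneg_imp_nondecreasing[OF assms(1)]) blast

lemma DERIV_nonpos_imp_ge:
  fixes h h' :: "real \<Rightarrow> real"
  assumes "a \<le> b" and "\<And>u. a \<le> u \<Longrightarrow> u \<le> b \<Longrightarrow> (h has_real_derivative h' u) (at u)"
    and "\<And>u. a \<le> u \<Longrightarrow> u \<le> b \<Longrightarrow> h' u \<le> 0"
  shows "h b \<le> h a"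
  using assms by (intro DERIV_nonpos_imp_nonincreasing[OF assms(1)]) blast

lemma nonneg_by_second_derivative:
  fixes h h' h'' :: "real \<Rightarrow> real"
  assumes "\<And>u. (h has_real_derivative h' u) (at u)" and "\<And>u. (h' has_real_derivative h'' u) (at u)"
    and "h 0 = 0" "h' 0 = 0" "0 \<le> t" and "\<And>u. 0 \<le> u \<Longrightarrow> u \<le> t \<Longrightarrow> 0 \<le> h'' u"
  shows "0 \<le> h t"
proof -
  have "0 \<le> h' u" if "0 \<le> u" "u \<le> t" for u
    using DERIV_nonneg_imp_le[of 0 u h' h''] assms that by auto
  then show ?thesis
    using DERIV_nonneg_imp_le[of 0 t h h'] assms by auto
qed

lemma nonneg_by_third_derivative:
  fixes h h' h'' h''' :: "real \<Rightarrow> real"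
  assumes "\<And>u. (h has_real_derivative h' u) (at u)" and "\<And>u. (h' has_real_derivative h'' u) (at u)"
    and "\<And>u. (h'' has_real_derivative h''' u) (at u)"
    and "h 0 = 0" "h' 0 = 0" "h'' 0 = 0" "0 \<le> t" and "\<And>u. 0 \<le> u \<Longrightarrow> u \<le> t \<Longrightarrow> 0 \<le> h''' u"
  shows "0 \<le> h t"
proof -
  have "0 \<le> h' u" if "0 \<le> u" "u \<le> t" for u
    using nonneg_by_second_derivative[of h' h'' h''' u] assms that by auto
  then show ?thesis
    using DERIV_nonneg_imp_le[of 0 t h h'] assms by auto
qed

lemma continuous_imp_has_antiderivative:
  fixes h :: "real \<Rightarrow> real"
  assumes "continuous_on UNIV h"
  shows "\<exists>H. \<forall>x. (H has_real_derivative h x) (at x)"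
  using einterval_antiderivative[of "-\<infinity>" "\<infinity>" h] assms
  by (auto simp: has_real_derivative_iff_has_vector_derivative continuous_on_eq_continuous_at)

definition antideriv :: "(real \<Rightarrow> real) \<Rightarrow> real \<Rightarrow> real" where
  "antideriv h = (SOME H. \<forall>x. (H has_real_derivative h x) (at x))"

lemma has_real_derivative_antideriv:
  "continuous_on UNIV h \<Longrightarrow> (antideriv h has_real_derivative h x) (at x)"
  unfolding antideriv_def using someI_ex[OF continuous_imp_has_antiderivative] by blast

lemma continuous_on_antideriv:
  "continuous_on UNIV h \<Longrightarrow> continuous_on UNIV (antideriv h)"
  by (auto intro!: continuous_at_imp_continuous_on DERIV_isCont has_real_derivative_antideriv)

lemma has_integral_of_has_real_derivative:
  fixes F f :: "real \<Rightarrow> real"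
  assumes "a \<le> b" and "\<And>x. (F has_real_derivative f x) (at x)"
  shows "(f has_integral (F b - F a)) {a..b}"
  by (rule fundamental_theorem_of_calculus[OF assms(1)])
    (auto simp flip: has_real_derivative_iff_has_vector_derivative
      intro: has_field_derivative_at_within assms(2))

lemma integrable_on_if_dominated:
  fixes f g :: "real \<Rightarrow> real"
  assumes "f \<in> borel_measurable borel" "g integrable_on S" "S \<in> sets lebesgue"
    and "\<And>x. x \<in> S \<Longrightarrow> \<bar>f x\<bar> \<le> g x"
  shows "f integrable_on S"
proof -
  have "f \<in> borel_measurable (lebesgue_on S)"
    using assms(1) by (simp add: measurable_completion measurable_restrict_space1)
  then show ?thesis
    by (rule measurable_bounded_by_integrable_imp_integrable) (use assms(2-4) in auto)
qed

lemma integral_swap_nonneg: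
  fixes h :: "real \<Rightarrow> real \<Rightarrow> real"
  assumes [measurable]: "(\<lambda>(s, t). h s t) \<in> borel_measurable (lborel \<Otimes>\<^sub>M lborel)"
    and [measurable]: "A \<in> sets lborel" "B \<in> sets lborel"
    and nonneg: "\<And>s t. s \<in> A \<Longrightarrow> t \<in> B \<Longrightarrow> 0 \<le> h s t"
    and int_t: "\<And>s. s \<in> A \<Longrightarrow> h s integrable_on B"
    and int_st: "(\<lambda>s. integral B (h s)) integrable_on A"
    and int_s: "\<And>t. t \<in> B \<Longrightarrow> (\<lambda>s. h s t) integrable_on A"
    and int_ts: "(\<lambda>t. integral A (\<lambda>s. h s t)) integrable_on B"
  shows "integral A (\<lambda>s. integral B (h s)) = integral B (\<lambda>t. integral A (\<lambda>s. h s t))"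
proof -
  have inner_t: "ennreal (indicator A s * integral B (h s))
      = (\<integral>\<^sup>+t. ennreal (indicator A s * indicator B t * h s t) \<partial>lborel)" for s
    using nn_integral_has_integral_lebesgue[OF _ integrable_integral[OF int_t]] nonneg
    by (cases "s \<in> A") auto
  have inner_s: "ennreal (indicator B t * integral A (\<lambda>s. h s t))
      = (\<integral>\<^sup>+s. ennreal (indicator A s * indicator B t * h s t) \<partial>lborel)" for t
    using nn_integral_has_integral_lebesgue[OF _ integrable_integral[OF int_s]] nonneg
    by (cases "t \<in> B") (auto simp: mult.commute)
  have "ennreal (integral A (\<lambda>s. integral B (h s)))
      = (\<integral>\<^sup>+s. ennreal (indicator A s * integral B (h s)) \<partial>lborel)"
    by (rule nn_integral_has_integral_lebesgue[OF _ integrable_integral[OF int_st], symmetric])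
      (auto intro!: integral_nonneg int_t nonneg)
  also have "\<dots> = (\<integral>\<^sup>+s. \<integral>\<^sup>+t. ennreal (indicator A s * indicator B t * h s t) \<partial>lborel \<partial>lborel)"
    using inner_t by simp
  also have "\<dots> = (\<integral>\<^sup>+t. \<integral>\<^sup>+s. ennreal (indicator A s * indicator B t * h s t) \<partial>lborel \<partial>lborel)"
    by (rule lborel_pair.Fubini'[symmetric]) measurable
  also have "\<dots> = (\<integral>\<^sup>+t. ennreal (indicator B t * integral A (\<lambda>s. h s t)) \<partial>lborel)"
    using inner_s by simp
  also have "\<dots> = ennreal (integral B (\<lambda>t. integral A (\<lambda>s. h s t)))"
    by (rule nn_integral_has_integral_lebesgue[OF _ integrable_integral[OF int_ts]])
      (auto intro!: integral_nonneg int_s nonneg)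
  finally show ?thesis
    by (subst (asm) ennreal_inj) (auto intro!: integral_nonneg int_s int_t int_st int_ts nonneg)
qed

lemma frequently_below_if_Liminf_le:
  fixes g :: "real \<Rightarrow> real"
  assumes "Liminf at_top (\<lambda>y. ereal (g y)) \<le> ereal a" and "0 < \<delta>"
  shows "\<exists>Y\<ge>N. g Y < a + \<delta>"
proof (rule ccontr)
  assume "\<not> (\<exists>Y\<ge>N. g Y < a + \<delta>)"
  then have "eventually (\<lambda>y. ereal (a + \<delta>) \<le> ereal (g y)) at_top"
    by (auto simp: eventually_at_top_linorder not_less)
  then have "ereal (a + \<delta>) \<le> Liminf at_top (\<lambda>y. ereal (g y))"
    by (rule Liminf_bounded)
  then have "ereal (a + \<delta>) \<le> ereal a"
    using assms(1) by (rule order_trans)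
  with \<open>0 < \<delta>\<close> show False
    by simp
qed

lemma power_le_exp_half:
  fixes t :: real
  assumes "0 \<le> t"
  shows "t \<le> 16 * exp (t / 2)" "t^2 \<le> 16 * exp (t / 2)" "t^3 \<le> 216 * exp (t / 2)"
proof -
  have le_exp: "x \<le> exp x" for x :: real
    using exp_ge_add_one_self[of x] by linarith
  show "t \<le> 16 * exp (t / 2)"
    using le_exp[of "t / 2"] exp_gt_zero[of "t / 2"] by linarith
  have "(t / 4)^2 \<le> exp (t / 4) ^ 2"
    using assms le_exp[of "t / 4"] by (intro power_mono) auto
  also have "exp (t / 4) ^ 2 = exp (t / 2)"
    by (simp add: power2_eq_square exp_add[symmetric])
  finally show "t^2 \<le> 16 * exp (t / 2)"
    by (simp add: power_divide)
  have "(t / 6)^3 \<le> exp (t / 6) ^ 3"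
    using assms le_exp[of "t / 6"] by (intro power_mono) auto
  also have "exp (t / 6) ^ 3 = exp (t / 2)"
    by (simp add: power3_eq_cube exp_add[symmetric])
  finally show "t^3 \<le> 216 * exp (t / 2)"
    by (simp add: power_divide)
qed

lemma has_integral_exp_minus_half: "((\<lambda>t. C * exp (- t / 2)) has_integral 2 * C) {0::real..}"
  using has_integral_mult_right[OF has_integral_exp_minus_to_infinity[of "1/2" 0], of C]
  by (simp add: mult.commute)

lemma integrable_exp_minus_mult:
  fixes g :: "real \<Rightarrow> real"
  assumes [measurable]: "g \<in> borel_measurable borel"
    and bound: "\<And>t. 0 < t \<Longrightarrow> \<bar>g t\<bar> \<le> C * exp (t / 2)"
  shows "(\<lambda>t. exp (- t) * g t) integrable_on {0..}"
proof -
  have "(\<lambda>t. exp (- t) * g t) integrable_on {0<..}"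
  proof (rule integrable_on_if_dominated)
    show "(\<lambda>t. C * exp (- t / 2)) integrable_on {0<..}"
      by (rule integrable_spike_set[OF has_integral_integrable[OF has_integral_exp_minus_half]])
        (auto intro: negligible_subset[of "{0}"])
    show "\<bar>exp (- t) * g t\<bar> \<le> C * exp (- t / 2)" if "t \<in> {0<..}" for t
    proof -
      have "\<bar>exp (- t) * g t\<bar> \<le> exp (- t) * (C * exp (t / 2))"
        using bound[of t] that by (simp add: abs_mult)
      also have "\<dots> = C * exp (- t / 2)"
        by (simp add: mult.left_commute exp_add[symmetric])
      finally show ?thesis .
    qed
  qed auto
  then show ?thesis
    by (rule integrable_spike_set) (auto intro: negligible_subset[of "{0}"])
qed

lemma integral_exp_minus_mult_le:
  fixes g :: "real \<Rightarrow> real"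
  assumes "(\<lambda>t. exp (- t) * g t) integrable_on {0..}"
    and "\<And>t. 0 < t \<Longrightarrow> g t \<le> C * exp (t / 2)"
  shows "integral {0..} (\<lambda>t. exp (- t) * g t) \<le> 2 * C"
proof -
  have "exp (- t) * g t \<le> C * exp (- t / 2)" if "0 < t" for t
  proof -
    have "exp (- t) * g t \<le> exp (- t) * (C * exp (t / 2))"
      using assms(2)[OF that] by simp
    also have "\<dots> = C * exp (- t / 2)"
      by (simp add: mult.left_commute exp_add[symmetric])
    finally show ?thesis .
  qed
  then have "integral {0<..} (\<lambda>t. exp (- t) * g t) \<le> integral {0<..} (\<lambda>t. C * exp (- t / 2))"
    by (intro integral_le integrable_spike_set[OF assms(1)]
        integrable_spike_set[OF has_integral_integrable[OF has_integral_exp_minus_half]])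
      (auto intro: negligible_subset[of "{0}"])
  moreover have "integral {0<..} h = integral {0..} h" for h :: "real \<Rightarrow> real"
    by (rule integral_spike_set) (auto intro: negligible_subset[of "{0}"])
  moreover have "integral {0..} (\<lambda>t. C * exp (- t / 2)) = 2 * C"
    by (rule integral_unique[OF has_integral_exp_minus_half])
  ultimately show ?thesis
    by (simp del: integral_mult_right)
qed

lemma integral_exp_minus_mult_nonneg:
  fixes g :: "real \<Rightarrow> real"
  assumes "(\<lambda>t. exp (- t) * g t) integrable_on {0..}" and "\<And>t. 0 < t \<Longrightarrow> 0 \<le> g t"
  shows "0 \<le> integral {0..} (\<lambda>t. exp (- t) * g t)"
proof -
  have "0 \<le> integral {0<..} (\<lambda>t. exp (- t) * g t)"
    by (rule integral_nonneg[OF integrable_spike_set[OF assms(1)]])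
      (use assms(2) in \<open>auto intro: negligible_subset[of "{0}"]\<close>)
  also have "\<dots> = integral {0..} (\<lambda>t. exp (- t) * g t)"
    by (rule integral_spike_set) (auto intro: negligible_subset[of "{0}"])
  finally show ?thesis .
qed

section \<open>Symmetric means\<close>

text \<open>If W' = w, then sym_mean W y t is the mean of w over [y - t, y + t] for t > 0; it is 0,
  not w y, at t = 0.\<close>

definition sym_mean :: "(real \<Rightarrow> real) \<Rightarrow> real \<Rightarrow> real \<Rightarrow> real" where
  "sym_mean W y t = (W (y + t) - W (y - t)) / (2 * t)"

lemma DERIV_sym_mean:
  assumes "\<And>x. (W has_real_derivative w x) (at x)" and "t \<noteq> 0"
  shows "((\<lambda>s. sym_mean W s t) has_real_derivative sym_mean w s t) (at s)"
  unfolding sym_mean_def using assms(2)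
  by (auto intro!: derivative_eq_intros DERIV_chain2[OF assms(1)] simp: field_simps)

lemma sym_mean_bounds:
  assumes W: "\<And>x. (W has_real_derivative w x) (at x)" and "0 \<le> t"
    and w: "\<And>u. y - t \<le> u \<Longrightarrow> u \<le> y + t \<Longrightarrow> 0 \<le> w u \<and> w u \<le> B"
  shows "0 \<le> sym_mean W y t" "sym_mean W y t \<le> B"
proof -
  have "0 \<le> W (y + t) - W (y - t) \<and> W (y + t) - W (y - t) \<le> 2 * B * t"
  proof
    have sum_bounds: "0 \<le> w (y + u) + w (y - u) \<and> w (y + u) + w (y - u) \<le> 2 * B" if "0 \<le> u" "u \<le> t" for u
      using w[of "y + u"] w[of "y - u"] that by auto
    have "(\<lambda>u. W (y + u) - W (y - u)) 0 \<le> (\<lambda>u. W (y + u) - W (y - u)) t"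
      by (rule DERIV_nonneg_imp_le[OF \<open>0 \<le> t\<close>, where h'="\<lambda>u. w (y + u) + w (y - u)"])
        (use sum_bounds in \<open>auto intro!: derivative_eq_intros DERIV_chain2[OF W]\<close>)
    then show "0 \<le> W (y + t) - W (y - t)" by simp
    have "(\<lambda>u. 2 * B * u - (W (y + u) - W (y - u))) 0 \<le> (\<lambda>u. 2 * B * u - (W (y + u) - W (y - u))) t"
      by (rule DERIV_nonneg_imp_le[OF \<open>0 \<le> t\<close>, where h'="\<lambda>u. 2 * B - (w (y + u) + w (y - u))"])
        (use sum_bounds in \<open>auto intro!: derivative_eq_intros DERIV_chain2[OF W]\<close>)
    then show "W (y + t) - W (y - t) \<le> 2 * B * t" by simp
  qed
  moreover have "0 \<le> B"
    using w[of y] \<open>0 \<le> t\<close> by auto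
  ultimately show "0 \<le> sym_mean W y t" "sym_mean W y t \<le> B"
    using \<open>0 \<le> t\<close> by (auto simp: sym_mean_def divide_simps mult_ac)
qed

lemma integrable_exp_minus_sym_mean:
  assumes W: "\<And>x. (W has_real_derivative w x) (at x)" and w: "\<And>x. 0 \<le> w x \<and> w x \<le> B"
  shows "(\<lambda>t. exp (- t) * sym_mean W y t) integrable_on {0..}"
proof (rule integrable_exp_minus_mult[where C=B])
  have [measurable]: "W \<in> borel_measurable borel"
    by (rule borel_measurable_continuous_onI)
      (auto intro!: continuous_at_imp_continuous_on DERIV_isCont W)
  show "(\<lambda>t. sym_mean W y t) \<in> borel_measurable borel"
    unfolding sym_mean_def by measurable
  show "\<bar>sym_mean W y t\<bar> \<le> B * exp (t / 2)" if "0 < t" for t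
  proof -
    have "0 \<le> sym_mean W y t" "sym_mean W y t \<le> B"
      using sym_mean_bounds[OF W, of t y B] that w by auto
    moreover have "B \<le> B * exp (t / 2)"
      using calculation that by (intro mult_le_cancel_left1[THEN iffD2]) auto
    ultimately show ?thesis
      by simp
  qed
qed

lemma sym_mean_minus_center_bound:
  assumes F: "\<And>x. (F has_real_derivative F1 x) (at x)"
    and F1: "\<And>x. (F1 has_real_derivative w x) (at x)"
    and "0 < t" and w: "\<And>u. 0 \<le> u \<Longrightarrow> u \<le> t \<Longrightarrow> \<bar>w (y + u) - w (y - u)\<bar> \<le> B"
  shows "\<bar>sym_mean F y t - F1 y\<bar> \<le> B * t / 4"
proof -
  define \<phi> where "\<phi> u = F (y + u) - F (y - u) - 2 * u * F1 y" for u
  define \<phi>' where "\<phi>' u = F1 (y + u) + F1 (y - u) - 2 * F1 y" for u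
  have \<phi>: "(\<phi> has_real_derivative \<phi>' u) (at u)" for u
    unfolding \<phi>_def \<phi>'_def by (auto intro!: derivative_eq_intros DERIV_chain2[OF F])
  have \<phi>': "(\<phi>' has_real_derivative w (y + u) - w (y - u)) (at u)" for u
    unfolding \<phi>'_def by (auto intro!: derivative_eq_intros DERIV_chain2[OF F1])
  have "0 \<le> B / 2 * t^2 - s * \<phi> t" if "s = 1 \<or> s = -1" for s
  proof (rule nonneg_by_second_derivative[where t=t])
    show "((\<lambda>u. B / 2 * u^2 - s * \<phi> u) has_real_derivative B * u - s * \<phi>' u) (at u)" for u
      by (auto intro!: derivative_eq_intros \<phi>)
    show "((\<lambda>u. B * u - s * \<phi>' u) has_real_derivative B - s * (w (y + u) - w (y - u))) (at u)" for u
      by (auto intro!: derivative_eq_intros \<phi>')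
    show "0 \<le> B - s * (w (y + u) - w (y - u))" if "0 \<le> u" "u \<le> t" for u
      using w[OF that] \<open>s = 1 \<or> s = -1\<close> by auto
  qed (use \<open>0 < t\<close> in \<open>auto simp: \<phi>_def \<phi>'_def\<close>)
  from this[of 1] this[of "-1"] have "\<bar>\<phi> t\<bar> / (2 * t) \<le> B / 2 * t^2 / (2 * t)"
    using \<open>0 < t\<close> by (intro divide_right_mono) auto
  also have "\<dots> = B * t / 4"
    using \<open>0 < t\<close> by (simp add: power2_eq_square)
  also have "\<bar>\<phi> t\<bar> / (2 * t) = \<bar>sym_mean F y t - F1 y\<bar>"
    using \<open>0 < t\<close> by (simp add: sym_mean_def \<phi>_def field_simps abs_div)
  finally show ?thesis .
qed

lemma sym_mean_minus_center_bounds: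
  assumes F: "\<And>x. (F has_real_derivative F1 x) (at x)"
    and F1: "\<And>x. (F1 has_real_derivative F2 x) (at x)"
    and F2: "\<And>x. (F2 has_real_derivative w x) (at x)"
    and "0 < t" and w: "\<And>u. y - t \<le> u \<Longrightarrow> u \<le> y + t \<Longrightarrow> 0 \<le> w u \<and> w u \<le> B"
  shows "0 \<le> sym_mean F y t - F1 y" "sym_mean F y t - F1 y \<le> B * t^2 / 6"
proof -
  define \<phi> where "\<phi> u = F (y + u) - F (y - u) - 2 * u * F1 y" for u
  define \<phi>' where "\<phi>' u = F1 (y + u) + F1 (y - u) - 2 * F1 y" for u
  define \<phi>'' where "\<phi>'' u = F2 (y + u) - F2 (y - u)" for u
  have \<phi>: "(\<phi> has_real_derivative \<phi>' u) (at u)" for u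
    unfolding \<phi>_def \<phi>'_def by (auto intro!: derivative_eq_intros DERIV_chain2[OF F])
  have \<phi>': "(\<phi>' has_real_derivative \<phi>'' u) (at u)" for u
    unfolding \<phi>'_def \<phi>''_def by (auto intro!: derivative_eq_intros DERIV_chain2[OF F1])
  have \<phi>'': "(\<phi>'' has_real_derivative w (y + u) + w (y - u)) (at u)" for u
    unfolding \<phi>''_def by (auto intro!: derivative_eq_intros DERIV_chain2[OF F2])
  have w_sum: "0 \<le> w (y + u) + w (y - u) \<and> w (y + u) + w (y - u) \<le> 2 * B" if "0 \<le> u" "u \<le> t" for u
    using w[of "y + u"] w[of "y - u"] that by auto
  have lower: "0 \<le> \<phi> t"
    by (rule nonneg_by_third_derivative[OF \<phi> \<phi>' \<phi>''])
      (use \<open>0 < t\<close> w_sum in \<open>auto simp: \<phi>_def \<phi>'_def \<phi>''_def\<close>)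
  have d1: "((\<lambda>u. B / 3 * u^3 - \<phi> u) has_real_derivative B * u^2 - \<phi>' u) (at u)" for u
    by (auto intro!: derivative_eq_intros \<phi> simp: power2_eq_square)
  have d2: "((\<lambda>u. B * u^2 - \<phi>' u) has_real_derivative 2 * B * u - \<phi>'' u) (at u)" for u
    by (auto intro!: derivative_eq_intros \<phi>')
  have d3: "((\<lambda>u. 2 * B * u - \<phi>'' u) has_real_derivative 2 * B - (w (y + u) + w (y - u))) (at u)" for u
    by (auto intro!: derivative_eq_intros \<phi>'')
  have "0 \<le> B / 3 * t^3 - \<phi> t"
    using nonneg_by_third_derivative[OF d1 d2 d3, of t] \<open>0 < t\<close> w_sum
    by (auto simp: \<phi>_def \<phi>'_def \<phi>''_def)
  then have "\<phi> t / (2 * t) \<le> B / 3 * t^3 / (2 * t)"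
    using \<open>0 < t\<close> by (intro divide_right_mono) auto
  also have "\<dots> = B * t^2 / 6"
    using \<open>0 < t\<close> by (simp add: power2_eq_square power3_eq_cube)
  finally show "sym_mean F y t - F1 y \<le> B * t^2 / 6"
    using \<open>0 < t\<close> by (simp add: sym_mean_def \<phi>_def field_simps)
  show "0 \<le> sym_mean F y t - F1 y"
    using lower \<open>0 < t\<close> by (simp add: sym_mean_def \<phi>_def field_simps)
qed

section \<open>Second-order linear differential inequalities\<close>

lemma deriv_excess_exp_mono:
  fixes f' f'' :: "real \<Rightarrow> real"
  assumes "0 < c" and f'': "\<And>y. (f' has_real_derivative f'' y) (at y)"
    and lower: "\<And>y. - B \<le> f'' y - c * f' y" and "y0 \<le> y"
  shows "f' y0 - B / c \<le> exp (- c * (y - y0)) * (f' y - B / c)"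
proof -
  define D where "D z = exp (- c * (z - y0)) * (f' z - B / c)" for z
  have "D y0 \<le> D y"
  proof (rule DERIV_nonneg_imp_le[OF \<open>y0 \<le> y\<close>])
    show "(D has_real_derivative exp (- c * (z - y0)) * (f'' z - c * f' z + B)) (at z)" for z
      unfolding D_def using \<open>0 < c\<close> by (auto intro!: derivative_eq_intros f'' simp: algebra_simps)
    show "0 \<le> exp (- c * (z - y0)) * (f'' z - c * f' z + B)" for z
      using lower[of z] by simp
  qed
  then show ?thesis
    by (simp add: D_def)
qed

lemma deriv_le_if_bounded_above:
  fixes f f' f'' :: "real \<Rightarrow> real"
  assumes "0 < c" "0 \<le> B"
    and f': "\<And>y. (f has_real_derivative f' y) (at y)"
    and f'': "\<And>y. (f' has_real_derivative f'' y) (at y)"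
    and lower: "\<And>y. - B \<le> f'' y - c * f' y" and upper: "\<And>y. f y \<le> U"
  shows "f' y0 \<le> B / c"
proof (rule ccontr)
  assume "\<not> f' y0 \<le> B / c"
  define d where "d = f' y0 - B / c"
  have "0 < d"
    using \<open>\<not> f' y0 \<le> B / c\<close> by (simp add: d_def)
  have f'_ge: "d \<le> f' y" if "y0 \<le> y" for y
  proof -
    have excess: "d \<le> exp (- c * (y - y0)) * (f' y - B / c)"
      unfolding d_def by (rule deriv_excess_exp_mono[OF \<open>0 < c\<close> f'' lower that])
    then have "0 < exp (- c * (y - y0)) * (f' y - B / c)"
      using \<open>0 < d\<close> by linarith
    then have "0 < f' y - B / c"
      by (simp add: zero_less_mult_iff)
    moreover have "exp (- c * (y - y0)) \<le> 1"
      using that \<open>0 < c\<close> by simp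
    ultimately have "exp (- c * (y - y0)) * (f' y - B / c) \<le> f' y - B / c"
      by (intro mult_left_le_one_le) auto
    moreover have "0 \<le> B / c"
      using \<open>0 < c\<close> \<open>0 \<le> B\<close> by simp
    ultimately show ?thesis
      using excess by linarith
  qed
  define n where "n = (\<bar>U\<bar> + \<bar>f y0\<bar>) / d + 1"
  have "0 \<le> n"
    using \<open>0 < d\<close> by (simp add: n_def add_nonneg_pos)
  have "f y0 - d * y0 \<le> f (y0 + n) - d * (y0 + n)"
    by (rule DERIV_nonneg_imp_le[where h'="\<lambda>y. f' y - d"])
      (use \<open>0 \<le> n\<close> f'_ge in \<open>auto intro!: derivative_eq_intros f'\<close>)
  moreover have "d * n = \<bar>U\<bar> + \<bar>f y0\<bar> + d"
    using \<open>0 < d\<close> by (simp add: n_def field_simps)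
  ultimately show False
    using upper[of "y0 + n"] \<open>0 < d\<close> by (simp add: algebra_simps)
qed

lemma abs_deriv_le_if_bounded:
  fixes f f' f'' :: "real \<Rightarrow> real"
  assumes "0 < c"
    and f': "\<And>y. (f has_real_derivative f' y) (at y)"
    and f'': "\<And>y. (f' has_real_derivative f'' y) (at y)"
    and "\<And>y. \<bar>f'' y - c * f' y\<bar> \<le> B" and "\<And>y. \<bar>f y\<bar> \<le> U"
  shows "\<bar>f' y\<bar> \<le> B / c"
proof -
  have ode: "- B \<le> f'' y - c * f' y" "f'' y - c * f' y \<le> B" and bounded: "f y \<le> U" "- f y \<le> U" for y
    using assms(4,5)[of y] by linarith+
  have "0 \<le> B"
    using assms(4)[of 0] by linarith
  have "f' y \<le> B / c"
    by (rule deriv_le_if_bounded_above[OF \<open>0 < c\<close> \<open>0 \<le> B\<close> f' f'' ode(1) bounded(1)])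
  moreover have "- f' y \<le> B / c"
  proof (rule deriv_le_if_bounded_above[OF \<open>0 < c\<close> \<open>0 \<le> B\<close>, where f'="\<lambda>y. - f' y"])
    show "((\<lambda>y. - f y) has_real_derivative - f' y) (at y)"
      "((\<lambda>y. - f' y) has_real_derivative - f'' y) (at y)" for y
      by (auto intro!: derivative_eq_intros f' f'')
    show "- B \<le> - f'' y - c * - f' y" "- f y \<le> U" for y
      using ode(2)[of y] bounded(2)[of y] by auto
  qed
  ultimately show ?thesis
    by linarith
qed

lemma taylor_upper_bound:
  fixes f f' f'' :: "real \<Rightarrow> real"
  assumes f': "\<And>y. (f has_real_derivative f' y) (at y)"
    and f'': "\<And>y. (f' has_real_derivative f'' y) (at y)"
    and bound: "\<And>y. \<bar>f'' y\<bar> \<le> A"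
  shows "f (x + h) \<le> f x + f' x * h + A / 2 * h^2"
proof -
  obtain s :: real where s: "s = 1 \<or> s = -1" and h: "h = s * \<bar>h\<bar>"
  proof (cases "0 \<le> h")
    case True
    then show ?thesis using that[of 1] by simp
  next
    case False
    then show ?thesis using that[of "-1"] by simp
  qed
  have d1: "((\<lambda>u. f x + s * f' x * u + A / 2 * u^2 - f (x + s * u)) has_real_derivative
      s * f' x + A * u - s * f' (x + s * u)) (at u)" for u
    by (auto intro!: derivative_eq_intros DERIV_chain2[OF f'] simp: power2_eq_square)
  have d2: "((\<lambda>u. s * f' x + A * u - s * f' (x + s * u)) has_real_derivative
      A - s * s * f'' (x + s * u)) (at u)" for u
    by (auto intro!: derivative_eq_intros DERIV_chain2[OF f''])
  have "0 \<le> A - s * s * f'' (x + s * u)" for u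
    using s bound[of "x + s * u"] by auto
  then have "0 \<le> f x + s * f' x * \<bar>h\<bar> + A / 2 * \<bar>h\<bar>^2 - f (x + s * \<bar>h\<bar>)"
    using nonneg_by_second_derivative[OF d1 d2, of "\<bar>h\<bar>"] by simp
  then show ?thesis
    using s by (subst (1 2) h) (auto simp: power2_eq_square)
qed

lemma deriv_squared_le:
  fixes f f' f'' :: "real \<Rightarrow> real"
  assumes f': "\<And>y. (f has_real_derivative f' y) (at y)"
    and f'': "\<And>y. (f' has_real_derivative f'' y) (at y)"
    and "\<And>y. \<bar>f'' y\<bar> \<le> A" "0 < A" and "\<And>y. m \<le> f y"
  shows "f' x ^ 2 \<le> 2 * A * (f x - m)"
proof -
  have "m \<le> f (x - f' x / A)"
    by fact
  also have "\<dots> \<le> f x + f' x * (- f' x / A) + A / 2 * (- f' x / A)^2"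
    using taylor_upper_bound[OF f' f'' assms(3), of x "- f' x / A"] by simp
  also have "\<dots> = f x - f' x ^ 2 / (2 * A)"
    using \<open>0 < A\<close> by (simp add: field_simps power2_eq_square)
  finally show ?thesis
    using \<open>0 < A\<close> by (simp add: field_simps)
qed

text \<open>The operator factors as (D - p)(D - q), so exp (- p z) * (g' - q g) is nonincreasing.\<close>

lemma differential_inequality_deriv_bound:
  fixes g g' g'' :: "real \<Rightarrow> real"
  assumes g': "\<And>z. (g has_real_derivative g' z) (at z)"
    and g'': "\<And>z. (g' has_real_derivative g'' z) (at z)"
    and ineq: "\<And>z. g'' z - (p + q) * g' z + p * q * g z \<le> 0"
    and "Y \<le> z"
  shows "g' z - q * g z \<le> exp (p * (z - Y)) * (g' Y - q * g Y)"
proof -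
  define P where "P u = exp (- p * (u - Y)) * (g' u - q * g u)" for u
  have "P z \<le> P Y"
  proof (rule DERIV_nonpos_imp_ge[OF \<open>Y \<le> z\<close>])
    show "(P has_real_derivative exp (- p * (u - Y)) * (g'' u - (p + q) * g' u + p * q * g u)) (at u)" for u
      unfolding P_def by (auto intro!: derivative_eq_intros g' g'' simp: algebra_simps)
    show "exp (- p * (u - Y)) * (g'' u - (p + q) * g' u + p * q * g u) \<le> 0" for u
      using ineq[of u] by (simp add: mult_nonneg_nonpos)
  qed
  then have "exp (p * (z - Y)) * P z \<le> exp (p * (z - Y)) * P Y"
    by simp
  then show ?thesis
    by (simp add: P_def mult.assoc[symmetric] exp_add[symmetric])
qed

lemma differential_inequality_forward:
  fixes g g' g'' :: "real \<Rightarrow> real"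
  assumes "0 \<le> p" "q \<le> 0"
    and g': "\<And>z. (g has_real_derivative g' z) (at z)"
    and g'': "\<And>z. (g' has_real_derivative g'' z) (at z)"
    and nonneg: "\<And>z. 0 \<le> g z"
    and ineq: "\<And>z. g'' z - (p + q) * g' z + p * q * g z \<le> 0"
    and "Y \<le> y" "y \<le> Y + R"
  shows "g y \<le> g Y + R * exp (p * R) * (\<bar>g' Y\<bar> - q * g Y)"
proof -
  define a where "a = \<bar>g' Y\<bar> - q * g Y"
  define d where "d = exp (p * R) * a"
  have "0 \<le> a"
    using mult_nonpos_nonneg[OF \<open>q \<le> 0\<close> nonneg[of Y]] abs_ge_zero[of "g' Y"] unfolding a_def by linarith
  have g'_le: "g' z \<le> d" if "Y \<le> z" "z \<le> y" for z
  proof -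
    have "g' z - q * g z \<le> exp (p * (z - Y)) * (g' Y - q * g Y)"
      by (rule differential_inequality_deriv_bound[OF g' g'' ineq \<open>Y \<le> z\<close>])
    also have "\<dots> \<le> exp (p * (z - Y)) * a"
      by (simp add: a_def)
    also have "\<dots> \<le> d"
      unfolding d_def using \<open>0 \<le> p\<close> \<open>0 \<le> a\<close> that \<open>y \<le> Y + R\<close>
      by (intro mult_right_mono) (auto intro: mult_left_mono)
    finally show ?thesis
      using \<open>q \<le> 0\<close> nonneg[of z] mult_nonpos_nonneg[of q "g z"] by linarith
  qed
  have "g y - d * y \<le> g Y - d * Y"
    by (rule DERIV_nonpos_imp_ge[OF \<open>Y \<le> y\<close>, where h'="\<lambda>z. g' z - d"])
      (use g'_le in \<open>auto intro!: derivative_eq_intros g'\<close>)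
  moreover have "d * (y - Y) \<le> d * R"
    using \<open>0 \<le> a\<close> \<open>y \<le> Y + R\<close> by (intro mult_left_mono) (auto simp: d_def)
  ultimately have "g y \<le> g Y + d * R"
    by (simp add: algebra_simps)
  then show ?thesis
    by (simp add: d_def a_def mult_ac)
qed

lemma differential_inequality_window:
  fixes g g' g'' :: "real \<Rightarrow> real"
  assumes "0 \<le> p" "q \<le> 0" "- q \<le> p"
    and g': "\<And>z. (g has_real_derivative g' z) (at z)"
    and g'': "\<And>z. (g' has_real_derivative g'' z) (at z)"
    and nonneg: "\<And>z. 0 \<le> g z"
    and ineq: "\<And>z. g'' z - (p + q) * g' z + p * q * g z \<le> 0"
    and "\<bar>y - Y\<bar> \<le> R"
  shows "g y \<le> g Y + R * exp (p * R) * (\<bar>g' Y\<bar> + p * g Y)"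
proof -
  have "0 \<le> R"
    using \<open>\<bar>y - Y\<bar> \<le> R\<close> by linarith
  have "- q * g Y \<le> p * g Y"
    using \<open>- q \<le> p\<close> nonneg[of Y] by (rule mult_right_mono)
  show ?thesis
  proof (cases "Y \<le> y")
    case True
    have "g y \<le> g Y + R * exp (p * R) * (\<bar>g' Y\<bar> - q * g Y)"
      by (rule differential_inequality_forward[OF assms(1,2) g' g'' nonneg ineq True])
        (use \<open>\<bar>y - Y\<bar> \<le> R\<close> in linarith)
    also have "\<dots> \<le> g Y + R * exp (p * R) * (\<bar>g' Y\<bar> + p * g Y)"
      using \<open>0 \<le> R\<close> \<open>- q * g Y \<le> p * g Y\<close> by (intro add_left_mono mult_left_mono) auto
    finally show ?thesis .
  next
    case False
    \<comment> \<open>z \<mapsto> g (- z) satisfies the inequality with (p, q) replaced by (- q, - p)\<close>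
    have "g (- (- y)) \<le> g (- (- Y)) + R * exp (- q * R) * (\<bar>- g' (- (- Y))\<bar> - - p * g (- (- Y)))"
    proof (rule differential_inequality_forward[where g="\<lambda>z. g (- z)" and p="- q" and q="- p"])
      show "((\<lambda>z. g (- z)) has_real_derivative - g' (- z)) (at z)" for z
        using DERIV_chain2[OF g' DERIV_minus[OF DERIV_ident]] by simp
      show "((\<lambda>z. - g' (- z)) has_real_derivative g'' (- z)) (at z)" for z
        using DERIV_minus[OF DERIV_chain2[OF g'' DERIV_minus[OF DERIV_ident]]] by simp
      show "g'' (- z) - (- q + - p) * - g' (- z) + - q * - p * g (- z) \<le> 0" for z
        using ineq[of "- z"] by (simp add: algebra_simps)
    qed (use assms False in auto)
    then have "g y \<le> g Y + R * exp (- q * R) * (\<bar>g' Y\<bar> + p * g Y)"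
      by simp
    also have "\<dots> \<le> g Y + R * exp (p * R) * (\<bar>g' Y\<bar> + p * g Y)"
      using \<open>0 \<le> R\<close> \<open>0 \<le> p\<close> nonneg[of Y] mult_right_mono[OF \<open>- q \<le> p\<close> \<open>0 \<le> R\<close>]
      by (intro add_left_mono mult_left_mono mult_right_mono) auto
    finally show ?thesis .
  qed
qed

section \<open>The kernel E\<close>

lemma has_integral_E:
  assumes "x \<noteq> 0"
  shows "((\<lambda>t. exp (- t) / (2 * t)) has_integral E x) {\<bar>x\<bar>..}"
proof -
  have "(\<lambda>t. exp (- t) / (2 * t)) integrable_on {\<bar>x\<bar>..}"
  proof (rule integrable_on_if_dominated)
    show "(\<lambda>t. exp (- t) / (2 * \<bar>x\<bar>)) integrable_on {\<bar>x\<bar>..}"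
      using integrable_on_divide[OF integrable_on_exp_minus_to_infinity[of 1]] by simp
    show "\<bar>exp (- t) / (2 * t)\<bar> \<le> exp (- t) / (2 * \<bar>x\<bar>)" if "t \<in> {\<bar>x\<bar>..}" for t
      using that assms by (auto simp: divide_simps)
  qed auto
  moreover have "E x = integral {\<bar>x\<bar>..} (\<lambda>t. 1 / 2 * (exp (- t) / t))"
    by (simp only: E_def integral_mult_right)
  ultimately show ?thesis
    by (simp add: integrable_integral)
qed

lemma nn_integral_E:
  assumes "x \<noteq> 0"
  shows "(\<integral>\<^sup>+t. ennreal (if \<bar>x\<bar> \<le> t then exp (- t) / (2 * t) else 0) \<partial>lborel) = ennreal (E x)"
proof -
  have "(\<lambda>t. ennreal (if \<bar>x\<bar> \<le> t then exp (- t) / (2 * t) else 0))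
      = (\<lambda>t. ennreal (indicator {\<bar>x\<bar>..} t * (exp (- t) / (2 * t))))"
    by (auto simp: indicator_def)
  then show ?thesis
    using nn_integral_has_integral_lebesgue[OF _ has_integral_E[OF assms]] by simp
qed

text \<open>E is a parametric Henstock-Kurzweil integral and not manifestly Borel measurable; this version
  is, and it agrees with E off 0, where the defining integral diverges.\<close>

definition E_borel :: "real \<Rightarrow> real" where
  "E_borel x = enn2real (\<integral>\<^sup>+t. ennreal (if \<bar>x\<bar> \<le> t then exp (- t) / (2 * t) else 0) \<partial>lborel)"

lemma E_borel_measurable [measurable]: "E_borel \<in> borel_measurable borel"
  unfolding E_borel_def by measurable

lemma E_eq_E_borel: "x \<noteq> 0 \<Longrightarrow> E x = E_borel x"
  using has_integral_nonneg[OF has_integral_E] by (simp add: E_borel_def nn_integral_E)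

lemma nn_integral_E_kernel_window:
  fixes w W :: "real \<Rightarrow> real"
  assumes [measurable]: "w \<in> borel_measurable borel"
    and W: "\<And>x. (W has_real_derivative w x) (at x)" and nonneg: "\<And>x. 0 \<le> w x"
  shows "(\<integral>\<^sup>+\<eta>. ennreal ((if \<bar>y - \<eta>\<bar> \<le> t then exp (- t) / (2 * t) else 0) * w \<eta>) \<partial>lborel)
      = ennreal (indicator {0..} t * (exp (- t) * sym_mean W y t))"
proof (cases "0 < t")
  case True
  have "(\<integral>\<^sup>+\<eta>. ennreal ((if \<bar>y - \<eta>\<bar> \<le> t then exp (- t) / (2 * t) else 0) * w \<eta>) \<partial>lborel)
      = (\<integral>\<^sup>+\<eta>. ennreal (exp (- t) / (2 * t)) * ennreal (indicator {y - t..y + t} \<eta> * w \<eta>) \<partial>lborel)"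
    using True by (intro nn_integral_cong) (auto simp: indicator_def ennreal_mult'[symmetric] abs_le_iff)
  also have "\<dots> = ennreal (exp (- t) / (2 * t)) * ennreal (W (y + t) - W (y - t))"
    using nn_integral_has_integral_lebesgue[OF _ has_integral_of_has_real_derivative[OF _ W]] True nonneg
    by (simp add: nn_integral_cmult)
  also have "\<dots> = ennreal (indicator {0..} t * (exp (- t) * sym_mean W y t))"
    using True by (simp add: ennreal_mult'[symmetric] sym_mean_def)
  finally show ?thesis .
next
  case False
  then have "(if \<bar>y - \<eta>\<bar> \<le> t then exp (- t) / (2 * t) else 0) = 0" for \<eta>
    by auto
  with False show ?thesis
    by (cases "t = 0") (auto simp: sym_mean_def)
qed

lemma ennreal_E_borel_mult:
  assumes "x \<noteq> 0" "0 \<le> a"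
  shows "ennreal (E_borel x * a)
    = (\<integral>\<^sup>+t. ennreal ((if \<bar>x\<bar> \<le> t then exp (- t) / (2 * t) else 0) * a) \<partial>lborel)"
proof -
  have "ennreal (E_borel x * a) = ennreal (E x) * ennreal a"
    using assms E_eq_E_borel[of x] by (simp add: ennreal_mult''[symmetric])
  also have "\<dots> = (\<integral>\<^sup>+t. ennreal (if \<bar>x\<bar> \<le> t then exp (- t) / (2 * t) else 0) * ennreal a \<partial>lborel)"
    using assms by (simp add: nn_integral_E[symmetric] nn_integral_multc)
  also have "\<dots> = (\<integral>\<^sup>+t. ennreal ((if \<bar>x\<bar> \<le> t then exp (- t) / (2 * t) else 0) * a) \<partial>lborel)"
    using assms by (intro nn_integral_cong) (simp add: ennreal_mult''[symmetric])
  finally show ?thesis .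
qed

lemma integral_E_convolution:
  fixes w W :: "real \<Rightarrow> real"
  assumes [measurable]: "w \<in> borel_measurable borel"
    and W: "\<And>x. (W has_real_derivative w x) (at x)" and w: "\<And>x. 0 \<le> w x \<and> w x \<le> B"
  shows "integral UNIV (\<lambda>\<eta>. E (y - \<eta>) * w \<eta>) = integral {0..} (\<lambda>t. exp (- t) * sym_mean W y t)"
proof -
  define k where "k t \<eta> = (if \<bar>y - \<eta>\<bar> \<le> t then exp (- t) / (2 * t) else 0) * w \<eta>" for t \<eta>
  define P where "P = integral {0..} (\<lambda>t. exp (- t) * sym_mean W y t)"
  have int: "(\<lambda>t. exp (- t) * sym_mean W y t) integrable_on {0..}"
    by (rule integrable_exp_minus_sym_mean[OF W w])
  have mean: "0 \<le> sym_mean W y t" if "0 \<le> t" for t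
    using sym_mean_bounds[OF W that, of y B] w by auto
  have nonneg: "\<And>x. 0 \<le> w x"
    using w by blast
  have "(\<integral>\<^sup>+\<eta>. ennreal (E_borel (y - \<eta>) * w \<eta>) \<partial>lborel) = (\<integral>\<^sup>+\<eta>. \<integral>\<^sup>+t. ennreal (k t \<eta>) \<partial>lborel \<partial>lborel)"
    by (rule nn_integral_cong_AE)
      (use AE_lborel_singleton[of y] w in \<open>auto elim!: eventually_mono simp: k_def ennreal_E_borel_mult\<close>)
  also have "\<dots> = (\<integral>\<^sup>+t. \<integral>\<^sup>+\<eta>. ennreal (k t \<eta>) \<partial>lborel \<partial>lborel)"
    by (rule lborel_pair.Fubini'[symmetric]) (unfold k_def, measurable)
  also have "\<dots> = (\<integral>\<^sup>+t. ennreal (indicator {0..} t * (exp (- t) * sym_mean W y t)) \<partial>lborel)"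
    by (simp add: k_def nn_integral_E_kernel_window[OF _ W nonneg])
  also have "\<dots> = ennreal P"
    unfolding P_def by (rule nn_integral_has_integral_lebesgue[OF _ integrable_integral[OF int]]) (use mean in auto)
  finally have "((\<lambda>\<eta>. E_borel (y - \<eta>) * w \<eta>) has_integral P) UNIV"
    by (rule nn_integral_has_integral[rotated 2])
      (use w integral_nonneg[OF int] mean in \<open>auto simp: E_borel_def P_def\<close>)
  then have "((\<lambda>\<eta>. E (y - \<eta>) * w \<eta>) has_integral P) UNIV"
    by (rule has_integral_spike[where S="{y}", rotated 2]) (auto simp: E_eq_E_borel)
  then show ?thesis
    by (simp add: P_def integral_unique)
qed

section \<open>The travelling wave\<close>

locale wave_profile =
  fixes f f' f'' :: "real \<Rightarrow> real" and c lam T_M :: real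
  assumes c_pos: "c > 0"
    and lam: "0 < lam" "lam \<le> T_M"
    and deriv_f: "\<And>y. (f has_real_derivative f' y) (at y)"
    and deriv_f': "\<And>y. (f' has_real_derivative f'' y) (at y)"
    and cont_f'': "continuous_on UNIV f''"
    and wave_eq: "\<And>y. f'' y - c * f' y - (f y) ^ 4
                 = - integral UNIV (\<lambda>\<eta>. E (y - \<eta>) * (f \<eta>) ^ 4)"
    and f_bounds: "\<And>y. lam \<le> f y \<and> f y \<le> T_M"
begin

definition m where "m = Inf (range f)"
definition S where "S = T_M ^ 4"
definition K where "K = 4 * T_M ^ 3"
definition v where "v y = f y ^ 4 - m ^ 4" for y

lemma f_cont: "continuous_on UNIV f"
  by (auto intro!: continuous_at_imp_continuous_on DERIV_isCont deriv_f)

lemma f'_cont: "continuous_on UNIV f'"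
  by (auto intro!: continuous_at_imp_continuous_on DERIV_isCont deriv_f')

lemma f_range: "0 \<le> f y" "f y \<le> T_M"
  using f_bounds[of y] lam by auto

lemma m_le: "m \<le> f y"
  unfolding m_def using f_bounds by (intro cInf_lower bdd_belowI) auto

lemma m_pos: "0 < m"
  unfolding m_def using f_bounds lam by (intro order.strict_trans2[OF _ cInf_greatest]) auto

lemma S_pos: "0 < S" and K_pos: "0 < K"
  using lam by (simp_all add: S_def K_def)

lemma v_nonneg: "0 \<le> v y"
  unfolding v_def using m_le[of y] m_pos by (simp add: power_mono)

lemma v_le_S: "v y \<le> S"
proof -
  have "f y ^ 4 \<le> T_M ^ 4"
    using f_bounds[of y] lam by (intro power_mono) auto
  moreover have "0 \<le> m ^ 4"
    using m_pos by simp
  ultimately show ?thesis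
    unfolding v_def S_def by linarith
qed

lemma v_le_K_gap: "v y \<le> K * (f y - m)"
proof -
  have fy: "m \<le> f y" "f y \<le> T_M"
    using m_le f_bounds by auto
  have "v y = (f y - m) * (f y ^ 3 + f y ^ 2 * m + f y * m ^ 2 + m ^ 3)"
    unfolding v_def by (simp add: algebra_simps power2_eq_square power3_eq_cube power4_eq_xxxx)
  also have "\<dots> \<le> (f y - m) * (4 * T_M ^ 3)"
  proof (rule mult_left_mono)
    have "f y ^ 3 \<le> T_M ^ 3" "f y ^ 2 * m \<le> T_M ^ 2 * T_M" "f y * m ^ 2 \<le> T_M * T_M ^ 2" "m ^ 3 \<le> T_M ^ 3"
      using fy m_pos by (auto intro!: mult_mono power_mono)
    then show "f y ^ 3 + f y ^ 2 * m + f y * m ^ 2 + m ^ 3 \<le> 4 * T_M ^ 3"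
      by (simp add: power3_eq_cube power2_eq_square)
  qed (use fy in auto)
  finally show ?thesis
    by (simp add: K_def mult.commute)
qed

lemma v_cont: "continuous_on UNIV v"
  unfolding v_def by (intro continuous_intros f_cont)

abbreviation "V1 \<equiv> antideriv v"
abbreviation "V2 \<equiv> antideriv V1"
abbreviation "V3 \<equiv> antideriv V2"

lemma V1: "(V1 has_real_derivative v x) (at x)"
  and V2: "(V2 has_real_derivative V1 x) (at x)"
  and V3: "(V3 has_real_derivative V2 x) (at x)"
  by (simp_all add: has_real_derivative_antideriv continuous_on_antideriv v_cont)

lemma V_measurable [measurable]:
  "v \<in> borel_measurable borel" "V1 \<in> borel_measurable borel"
  "V2 \<in> borel_measurable borel" "V3 \<in> borel_measurable borel"
  by (simp_all add: borel_measurable_continuous_onI continuous_on_antideriv v_cont)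

lemma continuous_on_compose_intros [continuous_intros]:
  "continuous_on A g \<Longrightarrow> continuous_on A (\<lambda>x. f (g x))"
  "continuous_on A g \<Longrightarrow> continuous_on A (\<lambda>x. f' (g x))"
  "continuous_on A g \<Longrightarrow> continuous_on A (\<lambda>x. f'' (g x))"
  "continuous_on A g \<Longrightarrow> continuous_on A (\<lambda>x. v (g x))"
  "continuous_on A g \<Longrightarrow> continuous_on A (\<lambda>x. V1 (g x))"
  by (auto intro: continuous_on_compose2[OF f_cont] continuous_on_compose2[OF f'_cont]
      continuous_on_compose2[OF cont_f''] continuous_on_compose2[OF v_cont]
      continuous_on_compose2[OF continuous_on_antideriv[OF v_cont]])

definition E_conv_v where
  "E_conv_v y = integral {0..} (\<lambda>t. exp (- t) * sym_mean V1 y t)" for y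

lemma mean_v_bounds: "0 \<le> t \<Longrightarrow> 0 \<le> sym_mean V1 y t \<and> sym_mean V1 y t \<le> S"
  using sym_mean_bounds[OF V1, of t y S] v_nonneg v_le_S by auto

lemma integrable_mean_v: "(\<lambda>t. exp (- t) * sym_mean V1 y t) integrable_on {0..}"
  using integrable_exp_minus_sym_mean[OF V1] v_nonneg v_le_S by blast

lemma E_conv_v_bounds: "0 \<le> E_conv_v y" "E_conv_v y \<le> S"
proof -
  show "0 \<le> E_conv_v y"
    unfolding E_conv_v_def by (rule integral_nonneg[OF integrable_mean_v]) (use mean_v_bounds in auto)
  have "E_conv_v y \<le> integral {0..} (\<lambda>t. S * exp (- t))"
    unfolding E_conv_v_def
    by (rule integral_le[OF integrable_mean_v])
      (use mean_v_bounds integrable_on_mult_right[OF integrable_on_exp_minus_to_infinity[of 1 0], of S] in auto)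
  also have "\<dots> = S"
    using integral_unique[OF has_integral_exp_minus_to_infinity[of 1 0]] by simp
  finally show "E_conv_v y \<le> S" .
qed

lemma ode_v: "f'' y - c * f' y = v y - E_conv_v y"
proof -
  have W: "((\<lambda>x. V1 x + m ^ 4 * x) has_real_derivative f x ^ 4) (at x)" for x
    using V1[of x] by (auto intro!: derivative_eq_intros simp: v_def)
  have "integral UNIV (\<lambda>\<eta>. E (y - \<eta>) * f \<eta> ^ 4)
      = integral {0..} (\<lambda>t. exp (- t) * sym_mean (\<lambda>x. V1 x + m ^ 4 * x) y t)"
    by (rule integral_E_convolution[OF _ W, where B="T_M ^ 4"])
      (use f_range in \<open>auto intro!: borel_measurable_continuous_onI continuous_intros f_cont power_mono\<close>)
  also have "\<dots> = integral {0..} (\<lambda>t. exp (- t) * sym_mean V1 y t + m ^ 4 * exp (- t))"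
    by (rule integral_spike[where S="{0}"]) (auto simp: sym_mean_def field_simps)
  also have "\<dots> = E_conv_v y + m ^ 4"
    using integral_unique[OF has_integral_add[OF integrable_integral[OF integrable_mean_v]
          has_integral_mult_right[OF has_integral_exp_minus_to_infinity[of 1 0], of "m ^ 4"]]]
    by (simp add: E_conv_v_def)
  finally show ?thesis
    using wave_eq[of y] by (simp add: v_def)
qed

lemma f'_bound: "\<bar>f' y\<bar> \<le> S / c"
proof (rule abs_deriv_le_if_bounded[OF c_pos deriv_f deriv_f'])
  show "\<bar>f'' y - c * f' y\<bar> \<le> S" for y
    using ode_v[of y] v_nonneg[of y] v_le_S[of y] E_conv_v_bounds[of y] by linarith
  show "\<bar>f y\<bar> \<le> T_M" for y
    using f_bounds[of y] lam by linarith
qed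

lemma f''_bound: "\<bar>f'' y\<bar> \<le> 2 * S"
proof -
  have "\<bar>c * f' y\<bar> \<le> S"
    using f'_bound[of y] c_pos by (simp add: abs_mult field_simps)
  then show ?thesis
    using ode_v[of y] v_nonneg[of y] v_le_S[of y] E_conv_v_bounds[of y] by linarith
qed

lemma f'_squared_le: "f' y ^ 2 \<le> 4 * S * (f y - m)"
  using deriv_squared_le[OF deriv_f deriv_f' f''_bound, of m y] S_pos m_le by simp

text \<open>mu and c - mu are the roots of X^2 - c X - K.\<close>

definition mu where "mu = (c + sqrt (c^2 + 4 * K)) / 2"

lemma mu_facts: "0 \<le> mu" "c - mu \<le> 0" "- (c - mu) \<le> mu" "mu * (c - mu) = - K"
proof -
  have "c < sqrt (c^2 + 4 * K)"
    using c_pos K_pos real_sqrt_less_mono[of "c^2" "c^2 + 4 * K"] by simp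
  then show "0 \<le> mu" "c - mu \<le> 0" "- (c - mu) \<le> mu"
    using c_pos by (auto simp: mu_def)
  have "sqrt (c^2 + 4 * K) ^ 2 = c^2 + 4 * K"
    using K_pos by simp
  then show "mu * (c - mu) = - K"
    by (simp add: mu_def field_simps power2_eq_square)
qed

lemma gap_window:
  assumes "\<bar>y - Y\<bar> \<le> R"
  shows "f y - m \<le> (f Y - m) + R * exp (mu * R) * (\<bar>f' Y\<bar> + mu * (f Y - m))"
proof (rule differential_inequality_window[where g="\<lambda>y. f y - m" and g'=f' and g''=f'' and q="c - mu",
      OF mu_facts(1-3)])
  show "((\<lambda>y. f y - m) has_real_derivative f' z) (at z)" for z
    by (auto intro!: derivative_eq_intros deriv_f)
  show "f'' z - (mu + (c - mu)) * f' z + mu * (c - mu) * (f z - m) \<le> 0" for z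
    using ode_v[of z] E_conv_v_bounds[of z] v_le_K_gap[of z] mu_facts(4) by simp
qed (use deriv_f' m_le assms in auto)

lemma gap_small_on_window:
  assumes "0 < \<eta>" "0 \<le> R"
  obtains \<delta> where "0 < \<delta>" "\<And>Y y. f Y - m < \<delta> \<Longrightarrow> \<bar>y - Y\<bar> \<le> R \<Longrightarrow> f y - m \<le> \<eta>"
proof
  define A where "A = 1 + R * exp (mu * R) * (2 * sqrt S + mu)"
  define z where "z = min 1 (\<eta> / A)"
  have "1 \<le> A"
    using \<open>0 \<le> R\<close> mu_facts(1) S_pos by (simp add: A_def)
  then have z: "0 < z" "z \<le> 1" "z * A \<le> \<eta>"
    using \<open>0 < \<eta>\<close> by (auto simp: z_def min_def field_simps)
  show "0 < z^2"
    using z by simp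
  fix Y y
  assume "f Y - m < z^2" "\<bar>y - Y\<bar> \<le> R"
  have "z^2 \<le> z"
    using z by (simp add: power2_eq_square mult_le_cancel_left1)
  then have gap: "0 \<le> f Y - m" "f Y - m \<le> z"
    using m_le[of Y] \<open>f Y - m < z^2\<close> by auto
  have "f' Y ^ 2 \<le> 4 * S * (f Y - m)"
    by (rule f'_squared_le)
  also have "\<dots> \<le> 4 * S * z^2"
    using \<open>f Y - m < z^2\<close> S_pos by (intro mult_left_mono) auto
  also have "\<dots> = (2 * sqrt S * z) ^ 2"
    using S_pos by (simp add: power_mult_distrib)
  finally have f'Y: "\<bar>f' Y\<bar> \<le> 2 * sqrt S * z"
    using z S_pos abs_le_square_iff[of "f' Y" "2 * sqrt S * z"] by simp
  have "f y - m \<le> (f Y - m) + R * exp (mu * R) * (\<bar>f' Y\<bar> + mu * (f Y - m))"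
    by (rule gap_window) fact
  also have "\<dots> \<le> z + R * exp (mu * R) * (2 * sqrt S * z + mu * z)"
    using gap f'Y \<open>0 \<le> R\<close> mu_facts(1) by (intro add_mono mult_left_mono) auto
  also have "\<dots> = z * A"
    by (simp add: A_def algebra_simps)
  finally show "f y - m \<le> \<eta>"
    using z by linarith
qed

text \<open>Formally G = E * V1 - V1 and L = E * V2 - V2, so that G' = E * v - v and L' = G; these
  identities are only used in integrated form, which avoids differentiating under the integral.\<close>

definition G where "G y = integral {0..} (\<lambda>t. exp (- t) * (sym_mean V2 y t - V1 y))" for y
definition L where "L y = integral {0..} (\<lambda>t. exp (- t) * (sym_mean V3 y t - V2 y))" for y

lemma G_integrand_bound: "0 < t \<Longrightarrow> \<bar>sym_mean V2 y t - V1 y\<bar> \<le> S * t / 4"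
proof (rule sym_mean_minus_center_bound[OF V2 V1])
  show "\<bar>v (y + u) - v (y - u)\<bar> \<le> S" for u
    using v_nonneg[of "y + u"] v_nonneg[of "y - u"] v_le_S[of "y + u"] v_le_S[of "y - u"] by linarith
qed

lemma L_integrand_bounds:
  assumes "0 < t" and "\<And>u. y - t \<le> u \<Longrightarrow> u \<le> y + t \<Longrightarrow> v u \<le> B"
  shows "0 \<le> sym_mean V3 y t - V2 y" "sym_mean V3 y t - V2 y \<le> B * t^2 / 6"
  using sym_mean_minus_center_bounds[OF V3 V2 V1 assms(1), of y B] v_nonneg assms(2) by auto

lemma integrable_G_integrand: "(\<lambda>t. exp (- t) * (sym_mean V2 y t - V1 y)) integrable_on {0..}"
proof (rule integrable_exp_minus_mult[where C="4 * S"])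
  show "\<bar>sym_mean V2 y t - V1 y\<bar> \<le> 4 * S * exp (t / 2)" if "0 < t" for t
  proof -
    have "\<bar>sym_mean V2 y t - V1 y\<bar> \<le> S * t / 4"
      by (rule G_integrand_bound[OF that])
    also have "\<dots> \<le> S * (16 * exp (t / 2)) / 4"
      using power_le_exp_half(1)[of t] that S_pos by (intro divide_right_mono mult_left_mono) auto
    finally show ?thesis
      by simp
  qed
qed (unfold sym_mean_def, measurable)

lemma integrable_L_integrand: "(\<lambda>t. exp (- t) * (sym_mean V3 y t - V2 y)) integrable_on {0..}"
proof (rule integrable_exp_minus_mult[where C="3 * S"])
  show "\<bar>sym_mean V3 y t - V2 y\<bar> \<le> 3 * S * exp (t / 2)" if "0 < t" for t
  proof -
    have "\<bar>sym_mean V3 y t - V2 y\<bar> \<le> S * t^2 / 6"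
      using L_integrand_bounds[OF that, of y S] v_le_S by simp
    also have "\<dots> \<le> S * (16 * exp (t / 2)) / 6"
      using power_le_exp_half(2)[of t] that S_pos by (intro divide_right_mono mult_left_mono) auto
    also have "\<dots> \<le> 3 * S * exp (t / 2)"
      using S_pos by simp
    finally show ?thesis .
  qed
qed (unfold sym_mean_def, measurable)

lemma L_nonneg: "0 \<le> L y"
  unfolding L_def
  by (rule integral_exp_minus_mult_nonneg[OF integrable_L_integrand])
    (use L_integrand_bounds(1)[where B=S] v_le_S in auto)

lemma L_integrand_le:
  assumes "0 < R" "0 \<le> \<eta>" and gap: "\<And>u. \<bar>u - y\<bar> \<le> R \<Longrightarrow> f u - m \<le> \<eta>" and "0 < t"
  shows "sym_mean V3 y t - V2 y \<le> K * \<eta> * t^2 / 6 + S * t^3 / (6 * R)"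
proof (cases "t \<le> R")
  case True
  have "sym_mean V3 y t - V2 y \<le> K * \<eta> * t^2 / 6"
  proof (rule L_integrand_bounds(2)[OF \<open>0 < t\<close>])
    fix u
    assume "y - t \<le> u" "u \<le> y + t"
    then have "K * (f u - m) \<le> K * \<eta>"
      using gap[of u] True K_pos by (intro mult_left_mono) auto
    then show "v u \<le> K * \<eta>"
      using v_le_K_gap[of u] by linarith
  qed
  moreover have "0 \<le> S * t^3 / (6 * R)"
    using S_pos \<open>0 < R\<close> \<open>0 < t\<close> by simp
  ultimately show ?thesis
    by linarith
next
  case False
  have "sym_mean V3 y t - V2 y \<le> S * t^2 / 6"
    using L_integrand_bounds(2)[OF \<open>0 < t\<close>, of y S] v_le_S by simp
  also have "\<dots> \<le> S * t^2 * (t / R) / 6"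
    using mult_left_mono[of 1 "t / R" "S * t^2"] False S_pos \<open>0 < R\<close>
    by (intro divide_right_mono) auto
  also have "\<dots> = S * t^3 / (6 * R)"
    by (simp add: power2_eq_square power3_eq_cube)
  moreover have "0 \<le> K * \<eta> * t^2 / 6"
    using K_pos \<open>0 \<le> \<eta>\<close> by simp
  ultimately show ?thesis
    by linarith
qed

lemma L_le:
  assumes "0 < R" "0 \<le> \<eta>" and gap: "\<And>u. \<bar>u - y\<bar> \<le> R \<Longrightarrow> f u - m \<le> \<eta>"
  shows "L y \<le> 6 * K * \<eta> + 72 * S / R"
proof -
  have "sym_mean V3 y t - V2 y \<le> (3 * K * \<eta> + 36 * S / R) * exp (t / 2)" if "0 < t" for t
  proof -
    have "sym_mean V3 y t - V2 y \<le> K * \<eta> * t^2 / 6 + S * t^3 / (6 * R)"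
      by (rule L_integrand_le[OF assms that])
    also have "\<dots> \<le> K * \<eta> * (16 * exp (t / 2)) / 6 + S * (216 * exp (t / 2)) / (6 * R)"
      using power_le_exp_half(2,3)[of t] that K_pos S_pos \<open>0 \<le> \<eta>\<close> \<open>0 < R\<close>
      by (intro add_mono divide_right_mono mult_left_mono) auto
    also have "\<dots> \<le> (3 * K * \<eta> + 36 * S / R) * exp (t / 2)"
      using K_pos \<open>0 \<le> \<eta>\<close> by (simp add: algebra_simps)
    finally show ?thesis .
  qed
  then have "L y \<le> 2 * (3 * K * \<eta> + 36 * S / R)"
    unfolding L_def by (rule integral_exp_minus_mult_le[OF integrable_L_integrand])
  then show ?thesis
    by simp
qed

lemma E_conv_v_eq: "E_conv_v = (\<lambda>s. v s - (f'' s - c * f' s))"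
  using ode_v by (auto simp: fun_eq_iff)

lemma weighted_identity_at_radius:
  assumes "a \<le> b" "t \<noteq> 0"
  shows "((\<lambda>s. (p + q * s) * sym_mean V1 s t) has_integral
      integral {a..b} (\<lambda>s. (p + q * s) * v s)
      + ((p + q * b) * (sym_mean V2 b t - V1 b) - q * (sym_mean V3 b t - V2 b))
      - ((p + q * a) * (sym_mean V2 a t - V1 a) - q * (sym_mean V3 a t - V2 a))) {a..b}"
proof -
  have ftc: "((\<lambda>s. (p + q * s) * (sym_mean V1 s t - v s)) has_integral
      ((p + q * b) * (sym_mean V2 b t - V1 b) - q * (sym_mean V3 b t - V2 b))
      - ((p + q * a) * (sym_mean V2 a t - V1 a) - q * (sym_mean V3 a t - V2 a))) {a..b}"
    by (rule has_integral_of_has_real_derivative[OF \<open>a \<le> b\<close>])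
      (auto intro!: derivative_eq_intros DERIV_sym_mean[OF V2 \<open>t \<noteq> 0\<close>] DERIV_sym_mean[OF V3 \<open>t \<noteq> 0\<close>]
        V1 V2 simp: algebra_simps)
  have v_int: "((\<lambda>s. (p + q * s) * v s) has_integral integral {a..b} (\<lambda>s. (p + q * s) * v s)) {a..b}"
    by (intro integrable_integral integrable_continuous_interval continuous_intros)
  from has_integral_add[OF ftc v_int] show ?thesis
    by (simp add: algebra_simps)
qed

lemma weighted_identity_over_radii:
  assumes "a \<le> b"
  shows "((\<lambda>t. integral {a..b} (\<lambda>s. (p + q * s) * (exp (- t) * sym_mean V1 s t))) has_integral
      integral {a..b} (\<lambda>s. (p + q * s) * v s) + ((p + q * b) * G b - q * L b) - ((p + q * a) * G a - q * L a))
    {0..}" (is "(_ has_integral ?rhs) _")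
proof (rule has_integral_spike[where S="{0}", rotated 2])
  let ?g = "\<lambda>t. exp (- t) * integral {a..b} (\<lambda>s. (p + q * s) * v s)
    + ((p + q * b) * (exp (- t) * (sym_mean V2 b t - V1 b)) - q * (exp (- t) * (sym_mean V3 b t - V2 b)))
    - ((p + q * a) * (exp (- t) * (sym_mean V2 a t - V1 a)) - q * (exp (- t) * (sym_mean V3 a t - V2 a)))"
  show "(?g has_integral ?rhs) {0..}"
    unfolding G_def L_def
    by (intro has_integral_add has_integral_diff has_integral_mult_right integrable_integral
        integrable_G_integrand integrable_L_integrand
        has_integral_mult_left[OF has_integral_exp_minus_to_infinity[of 1 0], simplified])
  show "integral {a..b} (\<lambda>s. (p + q * s) * (exp (- t) * sym_mean V1 s t)) = ?g t" if "t \<in> {0..} - {0}" for t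
    using integral_unique[OF has_integral_mult_left[OF weighted_identity_at_radius[OF \<open>a \<le> b\<close>],
          of t p q "exp (- t)"]] that
    by (simp add: algebra_simps)
qed simp

text \<open>The weight is required to be nonnegative only so that Tonelli's theorem applies.\<close>

lemma weighted_identity:
  assumes "a \<le> b" and weight_nonneg: "\<And>s. a \<le> s \<Longrightarrow> s \<le> b \<Longrightarrow> 0 \<le> p + q * s"
  shows "integral {a..b} (\<lambda>s. (p + q * s) * E_conv_v s)
      = integral {a..b} (\<lambda>s. (p + q * s) * v s) + ((p + q * b) * G b - q * L b) - ((p + q * a) * G a - q * L a)"
    (is "_ = ?rhs")
proof -
  define h where "h s t = (p + q * s) * (exp (- t) * sym_mean V1 s t)" for s t
  note radii = weighted_identity_over_radii[OF \<open>a \<le> b\<close>, of p q, folded h_def]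
  have "integral {a..b} (\<lambda>s. (p + q * s) * E_conv_v s) = integral {a..b} (\<lambda>s. integral {0..} (h s))"
    by (simp add: h_def[abs_def] E_conv_v_def)
  also have "\<dots> = integral {0..} (\<lambda>t. integral {a..b} (\<lambda>s. h s t))"
  proof (rule integral_swap_nonneg)
    show "(\<lambda>(s, t). h s t) \<in> borel_measurable (lborel \<Otimes>\<^sub>M lborel)"
      unfolding h_def sym_mean_def by measurable
    show "0 \<le> h s t" if "s \<in> {a..b}" "t \<in> {0..}" for s t
      using that weight_nonneg mean_v_bounds[of t s] by (auto simp: h_def)
    show "h s integrable_on {0..}" for s
      unfolding h_def by (intro integrable_on_mult_right integrable_mean_v)
    show "(\<lambda>s. integral {0..} (h s)) integrable_on {a..b}"
      by (auto simp: h_def[abs_def] E_conv_v_def[symmetric] E_conv_v_eq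
          intro!: integrable_continuous_interval continuous_intros)
    show "(\<lambda>s. h s t) integrable_on {a..b}" for t
      by (cases "t = 0") (auto simp: h_def sym_mean_def intro!: integrable_continuous_interval continuous_intros)
    show "(\<lambda>t. integral {a..b} (\<lambda>s. h s t)) integrable_on {0..}"
      using radii by blast
  qed auto
  also have "\<dots> = ?rhs"
    by (rule integral_unique[OF radii])
  finally show ?thesis .
qed

abbreviation "F \<equiv> antideriv f"

definition Phi where "Phi x = f' x - c * f x + G x" for x
definition Psi where "Psi x = f x - c * F x + L x" for x

lemma weighted_first_integrals:
  assumes "a \<le> b" and "\<And>s. a \<le> s \<Longrightarrow> s \<le> b \<Longrightarrow> 0 \<le> p + q * s"
  shows "(p + q * b) * Phi b - q * Psi b = (p + q * a) * Phi a - q * Psi a"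
proof -
  define N where "N s = (p + q * s) * (f' s - c * f s) - q * (f s - c * F s)" for s
  have "((\<lambda>s. (p + q * s) * v s - (p + q * s) * E_conv_v s) has_integral N b - N a) {a..b}"
  proof (rule has_integral_of_has_real_derivative[OF \<open>a \<le> b\<close>])
    show "(N has_real_derivative (p + q * s) * v s - (p + q * s) * E_conv_v s) (at s)" for s
      unfolding N_def E_conv_v_eq
      by (auto intro!: derivative_eq_intros deriv_f deriv_f' has_real_derivative_antideriv f_cont simp: algebra_simps)
  qed
  moreover have "(\<lambda>s. (p + q * s) * v s) integrable_on {a..b}"
    "(\<lambda>s. (p + q * s) * E_conv_v s) integrable_on {a..b}"
    unfolding E_conv_v_eq by (auto intro!: integrable_continuous_interval continuous_intros)
  ultimately have "integral {a..b} (\<lambda>s. (p + q * s) * v s) - integral {a..b} (\<lambda>s. (p + q * s) * E_conv_v s)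
      = N b - N a"
    by (simp add: integral_diff[symmetric] integral_unique)
  then show ?thesis
    using weighted_identity[OF assms] by (simp add: N_def Phi_def Psi_def algebra_simps)
qed

lemma Phi_constant: "Phi a = Phi b"
proof -
  have "Phi a = Phi b" if "a \<le> b" for a b
    using weighted_first_integrals[OF that, of 1 0] by simp
  then show ?thesis
    by (metis linear)
qed

lemma Psi_increment: "a \<le> b \<Longrightarrow> Psi b - Psi a = (b - a) * Phi 0"
  using weighted_first_integrals[of a b b "-1"] Phi_constant[of a 0] by (simp add: algebra_simps)

lemma F_increment_ge:
  assumes "a \<le> b"
  shows "m * (b - a) \<le> F b - F a"
proof -
  have "(\<lambda>x. F x - m * x) a \<le> (\<lambda>x. F x - m * x) b"
    by (rule DERIV_nonneg_imp_le[OF assms, where h'="\<lambda>x. f x - m"])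
      (auto intro!: derivative_eq_intros has_real_derivative_antideriv f_cont simp: m_le)
  then show ?thesis
    by (simp add: algebra_simps)
qed

lemma F_increment_le:
  assumes "a \<le> b" and "\<And>s. a \<le> s \<Longrightarrow> s \<le> b \<Longrightarrow> f s \<le> B"
  shows "F b - F a \<le> B * (b - a)"
proof -
  have "(\<lambda>x. F x - B * x) b \<le> (\<lambda>x. F x - B * x) a"
    by (rule DERIV_nonpos_imp_ge[OF assms(1), where h'="\<lambda>x. f x - B"])
      (auto intro!: derivative_eq_intros has_real_derivative_antideriv f_cont simp: assms(2))
  then show ?thesis
    by (simp add: algebra_simps)
qed

lemma gap_plus_L_increment:
  "a \<le> b \<Longrightarrow> (f b - m + L b) - (f a - m + L a) = (b - a) * Phi 0 + c * (F b - F a)"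
  using Psi_increment by (simp add: Psi_def algebra_simps)

context
  assumes close: "\<And>\<delta> N. 0 < \<delta> \<Longrightarrow> \<exists>Y\<ge>N. f Y - m < \<delta>"
begin

lemma small_gap_point_exists:
  assumes "0 < \<epsilon>"
  obtains Y where "N \<le> Y" "f Y - m + L Y \<le> \<epsilon>" "\<And>s. Y \<le> s \<Longrightarrow> s \<le> Y + 1 \<Longrightarrow> f s - m \<le> \<epsilon>"
proof -
  \<comment> \<open>chosen so that each of the two terms in L_le contributes at most \<epsilon> / 3\<close>
  define R where "R = 216 * S / \<epsilon>"
  define \<eta> where "\<eta> = \<epsilon> / (3 * (1 + 6 * K))"
  have "0 < R" "0 < \<eta>"
    using S_pos K_pos \<open>0 < \<epsilon>\<close> by (simp_all add: R_def \<eta>_def)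
  obtain \<delta> where "0 < \<delta>" and small: "\<And>Y y. f Y - m < \<delta> \<Longrightarrow> \<bar>y - Y\<bar> \<le> R + 1 \<Longrightarrow> f y - m \<le> \<eta>"
    using gap_small_on_window[OF \<open>0 < \<eta>\<close>, of "R + 1"] \<open>0 < R\<close> by auto
  obtain Y where "N \<le> Y" "f Y - m < \<delta>"
    using close[OF \<open>0 < \<delta>\<close>] by blast
  have window: "f u - m \<le> \<eta>" if "\<bar>u - Y\<bar> \<le> R + 1" for u
    using small[OF \<open>f Y - m < \<delta>\<close> that] .
  have "L Y \<le> 6 * K * \<eta> + 72 * S / R"
    by (rule L_le[OF \<open>0 < R\<close>]) (use \<open>0 < \<eta>\<close> window in auto)
  moreover have "\<eta> + 6 * K * \<eta> = \<eta> * (1 + 6 * K)"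
    by (simp add: algebra_simps)
  moreover have "\<eta> * (1 + 6 * K) = \<epsilon> / 3"
    using K_pos by (simp add: \<eta>_def field_simps add_pos_pos)
  moreover have "72 * S / R = \<epsilon> / 3"
    using S_pos \<open>0 < \<epsilon>\<close> by (simp add: R_def field_simps)
  moreover have "f Y - m \<le> \<eta>"
    using window[of Y] \<open>0 < R\<close> by simp
  ultimately have "f Y - m + L Y \<le> \<epsilon>"
    using \<open>0 < \<epsilon>\<close> by linarith
  moreover have "f s - m \<le> \<epsilon>" if "Y \<le> s" "s \<le> Y + 1" for s
  proof -
    have "\<eta> \<le> \<epsilon>"
      using K_pos \<open>0 < \<epsilon>\<close> by (simp add: \<eta>_def field_simps)
    then show ?thesis
      using window[of s] that \<open>0 < R\<close> by simp
  qed
  ultimately show ?thesis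
    using that[OF \<open>N \<le> Y\<close>] by blast
qed

lemma slope_nonneg: "0 \<le> Phi 0 + c * m"
proof (rule ccontr)
  assume "\<not> 0 \<le> Phi 0 + c * m"
  define \<epsilon> where "\<epsilon> = - (Phi 0 + c * m) / (2 * (1 + c))"
  have "0 < \<epsilon>"
    using \<open>\<not> 0 \<le> Phi 0 + c * m\<close> c_pos by (simp add: \<epsilon>_def)
  then obtain Y where Y: "f Y - m + L Y \<le> \<epsilon>" "\<And>s. Y \<le> s \<Longrightarrow> s \<le> Y + 1 \<Longrightarrow> f s - m \<le> \<epsilon>"
    using small_gap_point_exists by metis
  have "F (Y + 1) - F Y \<le> m + \<epsilon>"
    using F_increment_le[of Y "Y + 1" "m + \<epsilon>"] Y(2) by force
  then have "c * (F (Y + 1) - F Y) \<le> c * (m + \<epsilon>)"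
    using c_pos by (intro mult_left_mono) auto
  moreover have "0 \<le> f (Y + 1) - m + L (Y + 1)"
    using m_le L_nonneg by (simp add: add_nonneg_nonneg)
  moreover have "(1 + c) * \<epsilon> = - (Phi 0 + c * m) / 2"
    using c_pos by (simp add: \<epsilon>_def field_simps)
  ultimately show False
    using gap_plus_L_increment[of Y "Y + 1"] Y(1) \<open>\<not> 0 \<le> Phi 0 + c * m\<close> by (simp add: algebra_simps)
qed

lemma f_eq_m: "f y = m"
proof -
  have "f y - m + L y \<le> \<epsilon>" if "0 < \<epsilon>" for \<epsilon>
  proof -
    obtain Y where "y \<le> Y" "f Y - m + L Y \<le> \<epsilon>"
      using small_gap_point_exists[OF \<open>0 < \<epsilon>\<close>] by metis
    have "0 \<le> (Y - y) * (Phi 0 + c * m)"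
      using slope_nonneg \<open>y \<le> Y\<close> by simp
    also have "\<dots> \<le> (Y - y) * Phi 0 + c * (F Y - F y)"
      using mult_left_mono[OF F_increment_ge[OF \<open>y \<le> Y\<close>], of c] c_pos by (simp add: algebra_simps)
    also have "\<dots> = (f Y - m + L Y) - (f y - m + L y)"
      using gap_plus_L_increment[OF \<open>y \<le> Y\<close>] by simp
    finally show ?thesis
      using \<open>f Y - m + L Y \<le> \<epsilon>\<close> by linarith
  qed
  then have "f y - m + L y \<le> 0"
    by (meson dense not_le)
  then show ?thesis
    using m_le[of y] L_nonneg[of y] by linarith
qed

end

end

theorem lemma3p3:
  fixes f f' f'' :: "real \<Rightarrow> real" and c lam T_M :: real
  assumes c_pos: "c > 0"
    and lam: "0 < lam" "lam \<le> T_M"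
    and d1: "\<And>y. (f has_real_derivative f' y) (at y)"
    and d2: "\<And>y. (f' has_real_derivative f'' y) (at y)"
    and cont2: "continuous_on UNIV f''"
    and eq: "\<And>y. f'' y - c * f' y - (f y) ^ 4
                 = - integral UNIV (\<lambda>\<eta>. E (y - \<eta>) * (f \<eta>) ^ 4)"
    and bounds: "\<And>y. lam \<le> f y \<and> f y \<le> T_M"
  shows "(\<exists>C. \<forall>y. f y = C) \<or>
         Liminf at_top (\<lambda>y. ereal (f y)) > ereal (Inf (range f))"
proof (rule disjCI)
  interpret wave_profile f f' f'' c lam T_M
    using assms by unfold_locales auto
  assume "\<not> Liminf at_top (\<lambda>y. ereal (f y)) > ereal (Inf (range f))"
  then have "Liminf at_top (\<lambda>y. ereal (f y)) \<le> ereal m"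
    by (simp add: m_def not_less)
  then have "\<exists>Y\<ge>N. f Y - m < \<delta>" if "0 < \<delta>" for \<delta> N
    using frequently_below_if_Liminf_le[OF _ that] by force
  then show "\<exists>C. \<forall>y. f y = C"
    using f_eq_m by blast
qed

end
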